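(* Let $\mathcal C\subseteq\{0,1\}^n$ and $\mathcal D\subseteq\{0,1\}^m$ be neural codes and $\phi:R_\mathcal D\to R_\mathcal C$ a ring isomorphism. Then $\phi$ is a neural ring isomorphism if and only if the associated code map $q_\phi:\mathcal C\to\mathcal D$ is a permutation of labels, i.e. $m=n$ and there is a permutation $\sigma$ of $[n]$ such that $q_\phi(c)=(c_{\sigma(1)},\dots,c_{\sigma(n)})$ for all $c\in\mathcal C$ and $q_\phi$ is a bijection onto $\mathcal D$.
   Context: For a code $\mathcal C\subseteq\{0,1\}^n$, $R_\mathcal C$ is the ring of all functions $\mathcal C\to\mathbb F_2$, and $R[n]=R_{\{0,1\}^n}=\mathbb F_2[x_1,\dots,x_n]/\langle x_i^2-x_i\rangle$; $R_\mathcal C$ is an $R[n]$-module via $(r\cdot f)(c)=r(c)f(c)$. $\rho_c$ denotes the indicator function of $\{c\}$. For a ring homomorphism $\phi:R_\mathcal D\to R_\mathcal C$, the associated code map $q_\phi:\mathcal C\to\mathcal D$ sends $c$ to the unique $d\in\mathcal D$ with $\phi(\rho_d)(c)=1$. A ring homomorphism $\tau:R[m]\to R[n]$ is compatible with $\phi$ if $\phi(r\cdot f)=\tau(r)\cdot\phi(f)$ for all $r\in R[m]$, $f\in R_\mathcal D$; it is linear-monomial if $\tau(x_i)\in\{x_1,\dots,x_n,0,1\}$ for all $i$. A neural ring isomorphism is a ring isomorphism $\phi:R_\mathcal D\to R_\mathcal C$ for which there exists a compatible linear-monomial ring isomorphism $\tau:R[m]\to R[n]$. *)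

theory Defs
  imports Main "HOL-Library.Z2" "HOL-Combinatorics.Permutations"
begin

text \<open>Codewords of length n are boolean lists of length n; coordinates are 0-based.  An element of R_C (a function C to F2) is represented
  by a function on all lists that vanishes outside C.\<close>

definition hcube :: "nat \<Rightarrow> bool list set" where
  "hcube n = {c. length c = n}"

definition RC :: "bool list set \<Rightarrow> (bool list \<Rightarrow> bit) set" where
  "RC C = {f. \<forall>x. x \<notin> C \<longrightarrow> f x = 0}"

definition one_on :: "bool list set \<Rightarrow> bool list \<Rightarrow> bit" where
  "one_on C = (\<lambda>x. if x \<in> C then 1 else 0)"

definition zero_fn :: "bool list \<Rightarrow> bit" where
  "zero_fn = (\<lambda>x. 0)"

definition rho :: "bool list \<Rightarrow> bool list \<Rightarrow> bit" where
  "rho c = (\<lambda>x. if x = c then 1 else 0)"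

definition is_ring_hom ::
  "bool list set \<Rightarrow> bool list set \<Rightarrow> ((bool list \<Rightarrow> bit) \<Rightarrow> (bool list \<Rightarrow> bit)) \<Rightarrow> bool" where
  "is_ring_hom D C \<phi> \<longleftrightarrow>
     (\<forall>f\<in>RC D. \<phi> f \<in> RC C) \<and>
     (\<forall>f\<in>RC D. \<forall>g\<in>RC D. \<phi> (\<lambda>x. f x + g x) = (\<lambda>x. \<phi> f x + \<phi> g x)) \<and>
     (\<forall>f\<in>RC D. \<forall>g\<in>RC D. \<phi> (\<lambda>x. f x * g x) = (\<lambda>x. \<phi> f x * \<phi> g x)) \<and>
     \<phi> (one_on D) = one_on C"

definition is_ring_iso ::
  "bool list set \<Rightarrow> bool list set \<Rightarrow> ((bool list \<Rightarrow> bit) \<Rightarrow> (bool list \<Rightarrow> bit)) \<Rightarrow> bool" where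
  "is_ring_iso D C \<phi> \<longleftrightarrow> is_ring_hom D C \<phi> \<and> bij_betw \<phi> (RC D) (RC C)"

definition Rn :: "nat \<Rightarrow> (bool list \<Rightarrow> bit) set" where
  "Rn n = RC (hcube n)"

definition xvar :: "nat \<Rightarrow> nat \<Rightarrow> bool list \<Rightarrow> bit" where
  "xvar n i = (\<lambda>c. if length c = n \<and> c ! i then 1 else 0)"

definition act :: "(bool list \<Rightarrow> bit) \<Rightarrow> (bool list \<Rightarrow> bit) \<Rightarrow> bool list \<Rightarrow> bit" where
  "act r f = (\<lambda>c. r c * f c)"

definition qmap :: "bool list set \<Rightarrow> ((bool list \<Rightarrow> bit) \<Rightarrow> (bool list \<Rightarrow> bit)) \<Rightarrow> bool list \<Rightarrow> bool list" where
  "qmap D \<phi> c = (THE d. d \<in> D \<and> \<phi> (rho d) c = 1)"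

definition compatible ::
  "nat \<Rightarrow> bool list set \<Rightarrow> ((bool list \<Rightarrow> bit) \<Rightarrow> (bool list \<Rightarrow> bit)) \<Rightarrow> ((bool list \<Rightarrow> bit) \<Rightarrow> (bool list \<Rightarrow> bit)) \<Rightarrow> bool" where
  "compatible m D \<phi> \<tau> \<longleftrightarrow> (\<forall>r\<in>Rn m. \<forall>f\<in>RC D. \<phi> (act r f) = act (\<tau> r) (\<phi> f))"

definition linear_monomial :: "nat \<Rightarrow> nat \<Rightarrow> ((bool list \<Rightarrow> bit) \<Rightarrow> (bool list \<Rightarrow> bit)) \<Rightarrow> bool" where
  "linear_monomial m n \<tau> \<longleftrightarrow>
     (\<forall>i<m. \<tau> (xvar m i) \<in> {xvar n j | j. j < n} \<union> {zero_fn, one_on (hcube n)})"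

definition neural_ring_iso ::
  "nat \<Rightarrow> nat \<Rightarrow> bool list set \<Rightarrow> bool list set \<Rightarrow> ((bool list \<Rightarrow> bit) \<Rightarrow> (bool list \<Rightarrow> bit)) \<Rightarrow> bool" where
  "neural_ring_iso m n D C \<phi> \<longleftrightarrow>
     is_ring_iso D C \<phi> \<and>
     (\<exists>\<tau>. is_ring_iso (hcube m) (hcube n) \<tau> \<and> linear_monomial m n \<tau> \<and> compatible m D \<phi> \<tau>)"

end

theory Submission
  imports Defs
begin

text \<open>The indicators \<open>\<rho>\<^sub>d\<close> (\<open>d \<in> D\<close>) are orthogonal idempotents summing to \<open>1\<close>, so a unital
  ring homomorphism \<open>\<phi> : R\<^sub>D \<rightarrow> R\<^sub>C\<close> sends exactly one of them to a function that is \<open>1\<close> at a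
  given \<open>c \<in> C\<close>; this forces \<open>\<phi> f = f \<circ> q\<^sub>\<phi>\<close> on \<open>C\<close>, and \<open>\<phi>\<close> is bijective iff \<open>q\<^sub>\<phi>\<close> is.
  Applied to an isomorphism \<open>\<tau> : R[m] \<rightarrow> R[n]\<close> this gives \<open>2\<^sup>m = 2\<^sup>n\<close>. Being injective, a
  linear-monomial \<open>\<tau>\<close> cannot send a variable to a constant, so \<open>\<tau>(x\<^sub>i) = x\<^sub>\<sigma>\<^sub>(\<^sub>i\<^sub>)\<close> for a
  permutation \<open>\<sigma>\<close>, and compatibility tested on \<open>x\<^sub>i \<cdot> 1\<close> reads off \<open>q\<^sub>\<phi>(c)\<^sub>i = c\<^sub>\<sigma>\<^sub>(\<^sub>i\<^sub>)\<close>.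
  Conversely, pulling back along the relabelling \<open>c \<mapsto> (c\<^sub>\<sigma>\<^sub>(\<^sub>i\<^sub>))\<^sub>i\<close> is a compatible
  linear-monomial isomorphism.\<close>

lemma finite_hcube: "finite (hcube n)"
  using finite_lists_length_eq[of "UNIV :: bool set" n] by (simp add: hcube_def)

lemma card_hcube: "card (hcube n) = 2 ^ n"
  using card_lists_length_eq[of "UNIV :: bool set" n] by (simp add: hcube_def)

lemma zero_in_RC [simp]: "(\<lambda>x. 0) \<in> RC D"
  and rho_in_RC [simp]: "d \<in> D \<Longrightarrow> rho d \<in> RC D"
  and one_on_in_RC [simp]: "one_on D \<in> RC D"
  and act_in_RC [simp]: "f \<in> RC D \<Longrightarrow> act r f \<in> RC D"
  by (simp_all add: RC_def rho_def one_on_def act_def)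

lemma xvar_in_Rn [simp]: "xvar n i \<in> Rn n"
  by (simp add: Rn_def RC_def xvar_def hcube_def)

lemma ring_hom_add:
  "is_ring_hom D C \<phi> \<Longrightarrow> f \<in> RC D \<Longrightarrow> g \<in> RC D \<Longrightarrow>
    \<phi> (\<lambda>x. f x + g x) = (\<lambda>x. \<phi> f x + \<phi> g x)"
  and ring_hom_mult:
  "is_ring_hom D C \<phi> \<Longrightarrow> f \<in> RC D \<Longrightarrow> g \<in> RC D \<Longrightarrow>
    \<phi> (\<lambda>x. f x * g x) = (\<lambda>x. \<phi> f x * \<phi> g x)"
  and ring_hom_one_on: "is_ring_hom D C \<phi> \<Longrightarrow> \<phi> (one_on D) = one_on C"
  and ring_hom_vanishes: "is_ring_hom D C \<phi> \<Longrightarrow> f \<in> RC D \<Longrightarrow> x \<notin> C \<Longrightarrow> \<phi> f x = 0"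
  unfolding is_ring_hom_def RC_def by blast+

lemma ring_hom_zero:
  assumes "is_ring_hom D C \<phi>"
  shows "\<phi> (\<lambda>x. 0) = (\<lambda>x. 0)"
  using ring_hom_add[OF assms zero_in_RC zero_in_RC] by simp

lemma ring_hom_one_on_vanishes:
  assumes h: "is_ring_hom D C \<phi>" and "finite S" "S \<subseteq> D"
    and vanish: "\<forall>d\<in>S. \<phi> (rho d) c = 0"
  shows "\<phi> (one_on S) c = 0"
  using \<open>finite S\<close> \<open>S \<subseteq> D\<close> vanish
proof (induction S rule: finite_induct)
  case empty
  have "one_on {} = (\<lambda>x. 0)" by (simp add: one_on_def)
  then show ?case using ring_hom_zero[OF h] by simp
next
  case (insert d S)
  have "one_on (insert d S) = (\<lambda>x. one_on S x + rho d x)"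
    using insert.hyps by (auto simp: one_on_def rho_def)
  moreover have "one_on S \<in> RC D"
    using insert.prems by (auto simp: RC_def one_on_def)
  ultimately show ?case
    using insert ring_hom_add[OF h] by simp
qed

lemma ring_hom_rho_cover:
  assumes h: "is_ring_hom D C \<phi>" and "finite D" and "c \<in> C"
  shows "\<exists>d\<in>D. \<phi> (rho d) c = 1"
proof (rule ccontr)
  assume "\<not> ?thesis"
  then have "\<phi> (one_on D) c = 0"
    using ring_hom_one_on_vanishes[OF h \<open>finite D\<close>] by simp
  then show False
    using ring_hom_one_on[OF h] \<open>c \<in> C\<close> by (simp add: one_on_def)
qed

lemma ring_hom_rho_orthogonal:
  assumes h: "is_ring_hom D C \<phi>" and "d \<in> D" "d' \<in> D" "d \<noteq> d'"
  shows "\<phi> (rho d) c * \<phi> (rho d') c = 0"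
proof -
  have "(\<lambda>x. rho d x * rho d' x) = (\<lambda>x. 0)"
    using \<open>d \<noteq> d'\<close> by (auto simp: rho_def)
  then show ?thesis
    using ring_hom_mult[OF h, of "rho d" "rho d'"] ring_hom_zero[OF h] assms(2,3)
    by (metis rho_in_RC)
qed

lemma qmap_in_and_rho_qmap:
  assumes h: "is_ring_hom D C \<phi>" and "finite D" and "c \<in> C"
  shows "qmap D \<phi> c \<in> D \<and> \<phi> (rho (qmap D \<phi> c)) c = 1"
proof -
  have "\<exists>!d. d \<in> D \<and> \<phi> (rho d) c = 1"
    using ring_hom_rho_cover[OF assms] ring_hom_rho_orthogonal[OF h]
    by (metis mult_1 zero_neq_one)
  then show ?thesis unfolding qmap_def by (rule theI')
qed

theorem ring_hom_eq_pullback: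
  assumes h: "is_ring_hom D C \<phi>" and "finite D" and "c \<in> C" and f: "f \<in> RC D"
  shows "\<phi> f c = f (qmap D \<phi> c)"
proof -
  define d where "d = qmap D \<phi> c"
  have d: "d \<in> D" "\<phi> (rho d) c = 1"
    using qmap_in_and_rho_qmap[OF assms(1-3)] by (simp_all add: d_def)
  have "\<phi> f c = \<phi> (\<lambda>x. f x * rho d x) c"
    using ring_hom_mult[OF h f rho_in_RC[OF d(1)]] d(2) by simp
  also have "(\<lambda>x. f x * rho d x) = (if f d = 0 then (\<lambda>x. 0) else rho d)"
    by (auto simp: rho_def)
  also have "\<phi> \<dots> c = f d"
    using ring_hom_zero[OF h] d(2) by auto
  finally show ?thesis by (simp add: d_def)
qed

theorem ring_iso_qmap_bij_betw:
  assumes iso: "is_ring_iso D C \<phi>" and fin: "finite D"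
  shows "bij_betw (qmap D \<phi>) C D"
proof -
  have h: "is_ring_hom D C \<phi>" and b: "bij_betw \<phi> (RC D) (RC C)"
    using iso by (auto simp: is_ring_iso_def)
  have "inj_on (qmap D \<phi>) C"
  proof (rule inj_onI)
    fix c c' assume c: "c \<in> C" "c' \<in> C" and eq: "qmap D \<phi> c = qmap D \<phi> c'"
    obtain g where g: "g \<in> RC D" "\<phi> g = rho c"
      using b rho_in_RC[OF c(1)] unfolding bij_betw_def by (metis imageE)
    have "rho c c' = rho c c"
      using ring_hom_eq_pullback[OF h fin _ g(1)] c g(2) eq by metis
    then show "c = c'" by (simp add: rho_def split: if_splits)
  qed
  moreover have "D \<subseteq> qmap D \<phi> ` C"
  proof
    fix d assume d: "d \<in> D"
    show "d \<in> qmap D \<phi> ` C"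
    proof (rule ccontr)
      assume "d \<notin> qmap D \<phi> ` C"
      then have "\<phi> (rho d) = \<phi> (\<lambda>x. 0)"
        using ring_hom_eq_pullback[OF h fin _ rho_in_RC[OF d]] ring_hom_zero[OF h]
          ring_hom_vanishes[OF h rho_in_RC[OF d]]
        by (force simp: rho_def)
      then have "rho d = (\<lambda>x. 0)"
        using b d unfolding bij_betw_def inj_on_def by (metis rho_in_RC zero_in_RC)
      then show False by (metis rho_def zero_neq_one)
    qed
  qed
  ultimately show ?thesis
    using qmap_in_and_rho_qmap[OF h fin] unfolding bij_betw_def by blast
qed

lemma ring_iso_hcube_dim_eq:
  assumes "is_ring_iso (hcube m) (hcube n) \<tau>"
  shows "m = n"
proof -
  have "card (hcube n) = card (hcube m)"
    using bij_betw_same_card[OF ring_iso_qmap_bij_betw[OF assms finite_hcube]] .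
  then show ?thesis by (simp add: card_hcube)
qed

lemma xvar_ne_zero: "i < n \<Longrightarrow> xvar n i \<noteq> (\<lambda>x. 0)"
  by (metis (mono_tags) xvar_def length_replicate nth_replicate one_neq_zero)

lemma xvar_ne_one_on: "i < n \<Longrightarrow> xvar n i \<noteq> one_on (hcube n)"
  by (metis (mono_tags) xvar_def one_on_def hcube_def mem_Collect_eq
      length_replicate nth_replicate zero_neq_one)

lemma xvar_inj: "i < n \<Longrightarrow> j < n \<Longrightarrow> xvar n i = xvar n j \<Longrightarrow> i = j"
  by (drule fun_cong[of _ _ "(replicate n False)[i := True]"]) (auto simp: xvar_def nth_list_update split: if_splits)

lemma linear_monomial_iso_permutes_vars:
  assumes iso: "is_ring_iso (hcube n) (hcube n) \<tau>" and lm: "linear_monomial n n \<tau>"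
  obtains \<sigma> where "\<sigma> permutes {..<n}" "\<And>i. i < n \<Longrightarrow> \<tau> (xvar n i) = xvar n (\<sigma> i)"
proof -
  have h: "is_ring_hom (hcube n) (hcube n) \<tau>"
    using iso by (simp add: is_ring_iso_def)
  have inj: "inj_on \<tau> (Rn n)"
    using iso by (simp add: is_ring_iso_def bij_betw_def Rn_def)
  have "\<exists>j<n. \<tau> (xvar n i) = xvar n j" if i: "i < n" for i
  proof -
    have "\<tau> (xvar n i) \<noteq> \<tau> (\<lambda>x. 0)" "\<tau> (xvar n i) \<noteq> \<tau> (one_on (hcube n))"
      using inj_onD[OF inj] xvar_ne_zero[OF i] xvar_ne_one_on[OF i]
      by (metis Rn_def xvar_in_Rn zero_in_RC one_on_in_RC)+
    then show ?thesis
      using lm i ring_hom_zero[OF h] ring_hom_one_on[OF h]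
      by (auto simp: linear_monomial_def zero_fn_def)
  qed
  then obtain s where s: "\<And>i. i < n \<Longrightarrow> s i < n \<and> \<tau> (xvar n i) = xvar n (s i)"
    by metis
  define \<sigma> where "\<sigma> i = (if i < n then s i else i)" for i
  have vars: "\<And>i. i < n \<Longrightarrow> \<sigma> i < n \<and> \<tau> (xvar n i) = xvar n (\<sigma> i)"
    using s by (simp add: \<sigma>_def)
  have "inj_on \<sigma> {..<n}"
    by (rule inj_onI) (metis lessThan_iff vars xvar_inj inj_on_eq_iff[OF inj] xvar_in_Rn)
  moreover have "\<sigma> ` {..<n} = {..<n}"
    using vars calculation by (intro endo_inj_surj) auto
  ultimately have "\<sigma> permutes {..<n}"
    by (intro bij_imp_permutes) (simp_all add: bij_betw_def \<sigma>_def)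
  with vars that show ?thesis by blast
qed

lemma compatible_qmap_nth:
  assumes h: "is_ring_hom D C \<phi>" and "finite D" and D: "D \<subseteq> hcube n" and C: "C \<subseteq> hcube n"
    and comp: "compatible n D \<phi> \<tau>" and i: "i < n" and \<tau>: "\<tau> (xvar n i) = xvar n j"
    and c: "c \<in> C"
  shows "qmap D \<phi> c ! i = c ! j"
proof -
  have q: "qmap D \<phi> c \<in> hcube n" and lc: "c \<in> hcube n"
    using qmap_in_and_rho_qmap[OF h \<open>finite D\<close> c] D C c by auto
  have "act (xvar n i) (one_on D) (qmap D \<phi> c) = \<phi> (act (xvar n i) (one_on D)) c"
    using ring_hom_eq_pullback[OF h \<open>finite D\<close> c] by simp
  also have "\<dots> = act (xvar n j) (one_on C) c"
    using comp ring_hom_one_on[OF h] \<tau> by (simp add: compatible_def)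
  finally show ?thesis
    using q lc c qmap_in_and_rho_qmap[OF h \<open>finite D\<close> c]
    by (simp add: act_def xvar_def one_on_def hcube_def split: if_splits)
qed

definition relabel :: "nat \<Rightarrow> (nat \<Rightarrow> nat) \<Rightarrow> bool list \<Rightarrow> bool list" where
  "relabel n \<sigma> c = map (\<lambda>i. c ! \<sigma> i) [0..<n]"

definition relabel_pullback ::
    "nat \<Rightarrow> (nat \<Rightarrow> nat) \<Rightarrow> (bool list \<Rightarrow> bit) \<Rightarrow> bool list \<Rightarrow> bit" where
  "relabel_pullback n \<sigma> r = (\<lambda>c. if length c = n then r (relabel n \<sigma> c) else 0)"

lemma relabel_relabel_inv:
  assumes "\<sigma> permutes {..<n}" and "length c = n"
  shows "relabel n \<sigma> (relabel n (inv \<sigma>) c) = c"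
proof -
  have "\<And>i. i < n \<Longrightarrow> \<sigma> i < n \<and> inv \<sigma> (\<sigma> i) = i"
    using assms(1) permutes_in_image permutes_inverses(2) by fastforce
  then show ?thesis using assms(2) by (auto simp: relabel_def intro!: nth_equalityI)
qed

lemma relabel_pullback_in_RC [simp]: "relabel_pullback n \<sigma> r \<in> RC (hcube n)"
  by (simp add: relabel_pullback_def RC_def hcube_def)

lemma relabel_pullback_inv:
  assumes "\<sigma> permutes {..<n}" and "r \<in> RC (hcube n)"
  shows "relabel_pullback n (inv \<sigma>) (relabel_pullback n \<sigma> r) = r"
  using assms relabel_relabel_inv[OF assms(1)]
  by (auto simp: relabel_pullback_def relabel_def RC_def hcube_def fun_eq_iff)

lemma relabel_pullback_ring_iso:
  assumes "\<sigma> permutes {..<n}"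
  shows "is_ring_iso (hcube n) (hcube n) (relabel_pullback n \<sigma>)"
proof -
  have "is_ring_hom (hcube n) (hcube n) (relabel_pullback n \<sigma>)"
    unfolding is_ring_hom_def
    by (intro conjI ballI ext relabel_pullback_in_RC)
      (simp_all add: relabel_pullback_def one_on_def hcube_def relabel_def)
  moreover have "bij_betw (relabel_pullback n \<sigma>) (RC (hcube n)) (RC (hcube n))"
    using relabel_pullback_inv[OF assms] relabel_pullback_inv[OF permutes_inv[OF assms]]
      inv_inv_eq[OF permutes_bij[OF assms]]
    by (intro bij_betw_byWitness[where f' = "relabel_pullback n (inv \<sigma>)"]) auto
  ultimately show ?thesis by (simp add: is_ring_iso_def)
qed

lemma relabel_pullback_xvar: "i < n \<Longrightarrow> relabel_pullback n \<sigma> (xvar n i) = xvar n (\<sigma> i)"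
  by (auto simp: relabel_pullback_def relabel_def xvar_def fun_eq_iff)

lemma relabel_pullback_linear_monomial:
  assumes "\<sigma> permutes {..<n}"
  shows "linear_monomial n n (relabel_pullback n \<sigma>)"
  unfolding linear_monomial_def
proof (intro allI impI)
  fix i assume "i < n"
  then have "relabel_pullback n \<sigma> (xvar n i) = xvar n (\<sigma> i)" "\<sigma> i < n"
    using relabel_pullback_xvar permutes_in_image[OF assms] by simp_all
  then show "relabel_pullback n \<sigma> (xvar n i) \<in>
      {xvar n j |j. j < n} \<union> {zero_fn, one_on (hcube n)}"
    by blast
qed

lemma relabel_pullback_compatible:
  assumes h: "is_ring_hom D C \<phi>" and "finite D" and C: "C \<subseteq> hcube n"
    and q: "\<forall>c\<in>C. qmap D \<phi> c = relabel n \<sigma> c"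
  shows "compatible n D \<phi> (relabel_pullback n \<sigma>)"
  unfolding compatible_def
proof (intro ballI ext)
  fix r f c assume f: "f \<in> RC D"
  show "\<phi> (act r f) c = act (relabel_pullback n \<sigma> r) (\<phi> f) c"
  proof (cases "c \<in> C")
    case True
    then have "length c = n" using C by (auto simp: hcube_def)
    with True show ?thesis
      using ring_hom_eq_pullback[OF h \<open>finite D\<close> True act_in_RC[OF f]]
        ring_hom_eq_pullback[OF h \<open>finite D\<close> True f] q
      by (simp add: act_def relabel_pullback_def)
  next
    case False
    then show ?thesis
      using ring_hom_vanishes[OF h act_in_RC[OF f] False] ring_hom_vanishes[OF h f False]
      by (simp add: act_def)
  qed
qed

theorem corollary1:
  fixes C D :: "bool list set" and n m :: nat
    and \<phi> :: "(bool list \<Rightarrow> bit) \<Rightarrow> (bool list \<Rightarrow> bit)"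
  assumes "C \<subseteq> hcube n" and "D \<subseteq> hcube m"
    and "is_ring_iso D C \<phi>"
  shows "neural_ring_iso m n D C \<phi> \<longleftrightarrow>
    (m = n \<and>
     (\<exists>\<sigma>. \<sigma> permutes {..<n} \<and> (\<forall>c\<in>C. qmap D \<phi> c = map (\<lambda>i. c ! \<sigma> i) [0..<n])) \<and>
     bij_betw (qmap D \<phi>) C D)"
proof -
  have finD: "finite D" using assms(2) finite_hcube finite_subset by blast
  have h: "is_ring_hom D C \<phi>" using assms(3) by (simp add: is_ring_iso_def)
  show ?thesis
  proof
    assume "neural_ring_iso m n D C \<phi>"
    then obtain \<tau> where \<tau>: "is_ring_iso (hcube m) (hcube n) \<tau>" "linear_monomial m n \<tau>"
      "compatible m D \<phi> \<tau>" by (auto simp: neural_ring_iso_def)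
    have mn: "m = n" using ring_iso_hcube_dim_eq[OF \<tau>(1)] .
    obtain \<sigma> where \<sigma>: "\<sigma> permutes {..<n}" "\<And>i. i < n \<Longrightarrow> \<tau> (xvar n i) = xvar n (\<sigma> i)"
      using linear_monomial_iso_permutes_vars \<tau>(1,2) mn by metis
    have D: "D \<subseteq> hcube n" and comp: "compatible n D \<phi> \<tau>"
      using assms(2) \<tau>(3) mn by simp_all
    have "qmap D \<phi> c = map (\<lambda>i. c ! \<sigma> i) [0..<n]" if c: "c \<in> C" for c
    proof (rule nth_equalityI)
      show "length (qmap D \<phi> c) = length (map (\<lambda>i. c ! \<sigma> i) [0..<n])"
        using qmap_in_and_rho_qmap[OF h finD c] D by (auto simp: hcube_def)
      then show "qmap D \<phi> c ! i = map (\<lambda>i. c ! \<sigma> i) [0..<n] ! i"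
        if "i < length (qmap D \<phi> c)" for i
        using compatible_qmap_nth[OF h finD D assms(1) comp _ \<sigma>(2) c] that by simp
    qed
    then show "m = n \<and> (\<exists>\<sigma>. \<sigma> permutes {..<n} \<and>
        (\<forall>c\<in>C. qmap D \<phi> c = map (\<lambda>i. c ! \<sigma> i) [0..<n])) \<and> bij_betw (qmap D \<phi>) C D"
      using mn \<sigma>(1) ring_iso_qmap_bij_betw[OF assms(3) finD] by blast
  next
    assume "m = n \<and> (\<exists>\<sigma>. \<sigma> permutes {..<n} \<and>
        (\<forall>c\<in>C. qmap D \<phi> c = map (\<lambda>i. c ! \<sigma> i) [0..<n])) \<and> bij_betw (qmap D \<phi>) C D"
    then obtain \<sigma> where mn: "m = n" and \<sigma>: "\<sigma> permutes {..<n}"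
      and q: "\<forall>c\<in>C. qmap D \<phi> c = relabel n \<sigma> c"
      by (auto simp: relabel_def)
    show "neural_ring_iso m n D C \<phi>"
      unfolding neural_ring_iso_def mn
      using assms(3) relabel_pullback_ring_iso[OF \<sigma>] relabel_pullback_linear_monomial[OF \<sigma>]
        relabel_pullback_compatible[OF h finD assms(1) q]
      by blast
  qed
qed

end
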